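(* Let $\sigma:\mathcal A^*\to\mathcal B^*$ be a non-erasing morphism of free monoids over finite alphabets and $X\subseteq\mathcal A^{\mathbb Z}$ a subshift. If $\sigma$ is recognizable in $X$, then the measure transfer map $\sigma^{\mathcal M}_X:\mathcal M(X)\to\mathcal M(\sigma(X))$, $\mu\mapsto\mu^\sigma$, is injective.
   Context: $\mathcal M(X)$ denotes the set of finite shift-invariant Borel measures on $\mathcal A^{\mathbb Z}$ with support in $X$. For a word $w$, the cylinder $[w]$ is $\{\mathbf x:\mathbf x_{[1,|w|]}=w\}$. Measure transfer: let $\mathcal A_\sigma=\{a(k):a\in\mathcal A,1\le k\le|\sigma(a)|\}$, $\pi_\sigma(a)=a(1)\cdots a(|\sigma(a)|)$, $\alpha_\sigma(a(k))=$ the $k$-th letter of $\sigma(a)$. For $w\in\mathcal A_\sigma^*$ let $\widehat w\in\mathcal A^*$ be the (unique) shortest word such that $\pi_\sigma(\widehat w)$ contains $w$ as a factor, and set $\mu([\widehat w])=0$ if none exists. For an invariant measure $\mu$ on $\mathcal A^{\mathbb Z}$ the transferred measure $\mu^\sigma=\sigma^{\mathcal M}(\mu)$ is the invariant measure on $\mathcal B^{\mathbb Z}$ with $\mu^\sigma([w'])=\sum_{w\in\mathcal A_\sigma^*,\ \alpha_\sigma(w)=w'}\mu([\widehat w])$ for all $w'\in\mathcal B^*$; it maps $\mathcal M(X)$ into $\mathcal M(\sigma(X))$, where $\sigma(X)$ is the image subshift (smallest subshift containing $\sigma^{\mathbb Z}(X)$, with $\sigma^{\mathbb Z}(\mathbf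 x)_{[1,\infty)}=\sigma(x_1)\sigma(x_2)\cdots$). $\sigma$ is recognizable in $X$ if: whenever $\mathbf x,\mathbf x'\in X$, $\mathbf y\in\mathcal B^{\mathbb Z}$ satisfy $\mathbf y=T^k(\sigma^{\mathbb Z}(\mathbf x))=T^\ell(\sigma^{\mathbb Z}(\mathbf x'))$ with $0\le k<|\sigma(x_1)|$, $0\le\ell<|\sigma(x'_1)|$ ($T$ the shift), then $\mathbf x=\mathbf x'$ and $k=\ell$. *)

theory Defs
  imports "HOL-Analysis.Analysis" "HOL-Library.Sublist"
begin

definition shift :: "(int \<Rightarrow> 'a) \<Rightarrow> (int \<Rightarrow> 'a)" where
  "shift x = (\<lambda>i. x (i + 1))"

text \<open>Closedness in the product of discrete topologies, written out.\<close>
definition seq_closed :: "(int \<Rightarrow> 'a) set \<Rightarrow> bool" where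
  "seq_closed X \<longleftrightarrow>
     (\<forall>x. (\<forall>n::nat. \<exists>y\<in>X. \<forall>i. \<bar>i\<bar> \<le> int n \<longrightarrow> y i = x i) \<longrightarrow> x \<in> X)"

definition subshift :: "(int \<Rightarrow> 'a) set \<Rightarrow> bool" where
  "subshift X \<longleftrightarrow> seq_closed X \<and> shift ` X = X"

definition cyl :: "'a list \<Rightarrow> (int \<Rightarrow> 'a) set" where
  "cyl w = {x. \<forall>i<length w. x (int i + 1) = w ! i}"

text \<open>Borel sigma-algebra of A^Z (product of discrete finite spaces).\<close>
definition seq_space :: "(int \<Rightarrow> 'a) measure" where
  "seq_space = Pi\<^sub>M UNIV (\<lambda>_. count_space UNIV)"

definition shift_invariant :: "(int \<Rightarrow> 'a) measure \<Rightarrow> bool" where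
  "shift_invariant \<mu> \<longleftrightarrow> (\<forall>A\<in>sets \<mu>. emeasure \<mu> (shift -` A) = emeasure \<mu> A)"

definition inv_measures :: "(int \<Rightarrow> 'a) set \<Rightarrow> (int \<Rightarrow> 'a) measure set" where
  "inv_measures X = {\<mu>. sets \<mu> = sets seq_space \<and> finite_measure \<mu> \<and>
                        shift_invariant \<mu> \<and> (AE x in \<mu>. x \<in> X)}"

text \<open>A morphism sigma : A^* -> B^* is given by its letter images; it acts on
  words by concatenation.\<close>
definition morph :: "('a \<Rightarrow> 'b list) \<Rightarrow> 'a list \<Rightarrow> 'b list" where
  "morph \<sigma> u = concat (map \<sigma> u)"

definition non_erasing :: "('a \<Rightarrow> 'b list) \<Rightarrow> bool" where
  "non_erasing \<sigma> \<longleftrightarrow> (\<forall>a. \<sigma> a \<noteq> [])"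

text \<open>Starting positions: the word sigma(x_n) occupies positions
  pos x n + 1, ..., pos x n + |sigma(x_n)|, with pos x 1 = 0.\<close>
definition pos :: "('a \<Rightarrow> 'b list) \<Rightarrow> (int \<Rightarrow> 'a) \<Rightarrow> int \<Rightarrow> int" where
  "pos \<sigma> x n = (if n \<ge> 1 then (\<Sum>k\<in>{1..<n}. int (length (\<sigma> (x k))))
                 else - (\<Sum>k\<in>{n..0}. int (length (\<sigma> (x k)))))"

text \<open>sigma^Z(x): the bi-infinite concatenation with
  sigma^Z(x)_[1,oo) = sigma(x_1) sigma(x_2) ...\<close>
definition sigmaZ :: "('a \<Rightarrow> 'b list) \<Rightarrow> (int \<Rightarrow> 'a) \<Rightarrow> (int \<Rightarrow> 'b)" where
  "sigmaZ \<sigma> x = (\<lambda>j. let n = (THE n. pos \<sigma> x n < j \<and> j \<le> pos \<sigma> x (n + 1))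
                     in \<sigma> (x n) ! nat (j - pos \<sigma> x n - 1))"

definition recognizable :: "('a \<Rightarrow> 'b list) \<Rightarrow> (int \<Rightarrow> 'a) set \<Rightarrow> bool" where
  "recognizable \<sigma> X \<longleftrightarrow>
     (\<forall>x\<in>X. \<forall>x'\<in>X. \<forall>k l.
        k < length (\<sigma> (x 1)) \<and> l < length (\<sigma> (x' 1)) \<and>
        (shift ^^ k) (sigmaZ \<sigma> x) = (shift ^^ l) (sigmaZ \<sigma> x')
        \<longrightarrow> x = x' \<and> k = l)"

text \<open>A_sigma = {a(k) : 1 <= k <= |sigma(a)|}, letter a(k) encoded as (a,k).\<close>
definition Asig :: "('a \<Rightarrow> 'b list) \<Rightarrow> ('a \<times> nat) set" where
  "Asig \<sigma> = {(a, k). 1 \<le> k \<and> k \<le> length (\<sigma> a)}"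

definition pi_sig :: "('a \<Rightarrow> 'b list) \<Rightarrow> 'a \<Rightarrow> ('a \<times> nat) list" where
  "pi_sig \<sigma> a = map (\<lambda>k. (a, k)) [1..<length (\<sigma> a) + 1]"

definition pi_word :: "('a \<Rightarrow> 'b list) \<Rightarrow> 'a list \<Rightarrow> ('a \<times> nat) list" where
  "pi_word \<sigma> u = concat (map (pi_sig \<sigma>) u)"

definition alpha_sig :: "('a \<Rightarrow> 'b list) \<Rightarrow> ('a \<times> nat) \<Rightarrow> 'b" where
  "alpha_sig \<sigma> p = \<sigma> (fst p) ! (snd p - 1)"

definition hat_measure ::
  "('a \<Rightarrow> 'b list) \<Rightarrow> (int \<Rightarrow> 'a) measure \<Rightarrow> ('a \<times> nat) list \<Rightarrow> ennreal" where
  "hat_measure \<sigma> \<mu> w =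
     (if \<exists>u. sublist w (pi_word \<sigma> u)
      then emeasure \<mu> (cyl (ARG_MIN length u. sublist w (pi_word \<sigma> u)))
      else 0)"

definition is_transfer ::
  "('a \<Rightarrow> 'b list) \<Rightarrow> (int \<Rightarrow> 'a) measure \<Rightarrow> (int \<Rightarrow> 'b) measure \<Rightarrow> bool" where
  "is_transfer \<sigma> \<mu> \<nu> \<longleftrightarrow>
     sets \<nu> = sets seq_space \<and> finite_measure \<nu> \<and> shift_invariant \<nu> \<and>
     (\<forall>w'. w' \<noteq> [] \<longrightarrow>
        emeasure \<nu> (cyl w') =
          (\<Sum>w\<in>{w. set w \<subseteq> Asig \<sigma> \<and> map (alpha_sig \<sigma>) w = w'}. hat_measure \<sigma> \<mu> w))"

end

theory Submission
  imports Defs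
begin

(*
  A finite shift-invariant measure mu is determined by its values on cylinders.  For a word v,
  let c = pi_sigma(v).  Then mu[v] is the weight of c in the measure transfer, and since these
  weights are consistent under one-letter extensions on either side, mu[v] is also the sum of
  the weights of all words s c t with |s| = |t| = L.  Only words occurring in pi_sigma^Z(x) for
  some x in X carry weight.  Recognizability together with compactness of X gives a radius L
  such that the letters of sigma^Z(x) in the window of radius L around a position determine the
  letter of pi_sigma^Z(x) there; so two such words s c t with the same alpha_sigma-image agree
  in the middle.  Grouping the sum by alpha_sigma-images therefore writes mu[v] as a sum of
  values nu[w'] over a set of words w' that does not depend on mu.
*)

section \<open>Words over the alphabet of positions\<close>

definition adjacent :: "('a \<Rightarrow> 'b list) \<Rightarrow> 'a \<times> nat \<Rightarrow> 'a \<times> nat \<Rightarrow> bool" where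
  "adjacent \<sigma> p q \<longleftrightarrow>
     (fst q = fst p \<and> snd q = Suc (snd p)) \<or> (snd p = length (\<sigma> (fst p)) \<and> snd q = 1)"

definition admissible :: "('a \<Rightarrow> 'b list) \<Rightarrow> ('a \<times> nat) list \<Rightarrow> bool" where
  "admissible \<sigma> w \<longleftrightarrow> set w \<subseteq> Asig \<sigma> \<and> successively (adjacent \<sigma>) w"

definition block_starts :: "('a \<times> nat) list \<Rightarrow> 'a list" where
  "block_starts w = map fst (filter (\<lambda>p. snd p = 1) w)"

text \<open>For admissible \<open>w\<close>, \<open>decode w\<close> is the word \<open>w\<close>-hat of the measure transfer: the letter
  whose \<open>\<sigma>\<close>-block contains the first letter of \<open>w\<close>, followed by one letter for each block that
  starts inside \<open>w\<close> (see \<open>hat_measure_eq\<close>).\<close>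
definition decode :: "('a \<times> nat) list \<Rightarrow> 'a list" where
  "decode w = fst (hd w) # block_starts (tl w)"

lemma block_starts_simps [simp]:
  "block_starts [] = []"
  "block_starts (p # w) = (if snd p = 1 then fst p # block_starts w else block_starts w)"
  "block_starts (w @ w') = block_starts w @ block_starts w'"
  by (auto simp: block_starts_def)

lemma decode_Cons: "decode (p # w) = fst p # block_starts w"
  by (simp add: decode_def)

lemma decode_snoc:
  "w \<noteq> [] \<Longrightarrow> decode (w @ [p]) = decode w @ (if snd p = 1 then [fst p] else [])"
  by (cases w) (auto simp: decode_def)

lemma Asig_iff: "p \<in> Asig \<sigma> \<longleftrightarrow> 1 \<le> snd p \<and> snd p \<le> length (\<sigma> (fst p))"
  by (cases p) (auto simp: Asig_def)

lemma finite_Asig: "finite (Asig (\<sigma> :: 'a::finite \<Rightarrow> 'b list))"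
proof (rule finite_subset)
  have "length (\<sigma> a) \<le> Max (range (\<lambda>a. length (\<sigma> a)))" for a
    by (rule Max_ge) auto
  then show "Asig \<sigma> \<subseteq> UNIV \<times> {..Max (range (\<lambda>a. length (\<sigma> a)))}"
    unfolding Asig_def using le_trans by blast
qed simp

lemma pi_sig_conv_map: "pi_sig \<sigma> a = map (\<lambda>i. (a, Suc i)) [0..<length (\<sigma> a)]"
  by (simp add: pi_sig_def map_Suc_upt[symmetric] del: upt_Suc)

lemma length_pi_sig [simp]: "length (pi_sig \<sigma> a) = length (\<sigma> a)"
  by (simp add: pi_sig_conv_map)

lemma nth_pi_sig [simp]: "i < length (\<sigma> a) \<Longrightarrow> pi_sig \<sigma> a ! i = (a, Suc i)"
  by (simp add: pi_sig_conv_map)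

lemma drop_pi_sig:
  "k < length (\<sigma> a) \<Longrightarrow> drop k (pi_sig \<sigma> a) = (a, Suc k) # drop (Suc k) (pi_sig \<sigma> a)"
  by (metis Cons_nth_drop_Suc length_pi_sig nth_pi_sig)

lemma pi_sig_Cons: "\<sigma> a \<noteq> [] \<Longrightarrow> pi_sig \<sigma> a = (a, 1) # tl (pi_sig \<sigma> a)"
  using drop_pi_sig[of 0 \<sigma> a] by (simp add: drop_Suc)

lemma set_pi_sig_subset: "set (pi_sig \<sigma> a) \<subseteq> Asig \<sigma>"
  by (auto simp: pi_sig_conv_map Asig_def)

lemma block_starts_tl_pi_sig: "block_starts (tl (pi_sig \<sigma> a)) = []"
  by (auto simp: block_starts_def filter_empty_conv pi_sig_conv_map map_tl[symmetric])

lemma block_starts_pi_sig: "\<sigma> a \<noteq> [] \<Longrightarrow> block_starts (pi_sig \<sigma> a) = [a]"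
  by (subst pi_sig_Cons) (simp_all add: block_starts_tl_pi_sig)

lemma successively_adjacent_pi_sig: "successively (adjacent \<sigma>) (pi_sig \<sigma> a)"
  unfolding pi_sig_conv_map successively_map
  by (auto simp: successively_conv_nth adjacent_def)

lemma last_pi_sig: "\<sigma> a \<noteq> [] \<Longrightarrow> last (pi_sig \<sigma> a) = (a, length (\<sigma> a))"
  by (simp add: pi_sig_conv_map last_map)

lemma pi_word_simps [simp]:
  "pi_word \<sigma> [] = []"
  "pi_word \<sigma> (a # u) = pi_sig \<sigma> a @ pi_word \<sigma> u"
  "pi_word \<sigma> (u @ v) = pi_word \<sigma> u @ pi_word \<sigma> v"
  by (auto simp: pi_word_def)

lemma block_starts_pi_word: "non_erasing \<sigma> \<Longrightarrow> block_starts (pi_word \<sigma> u) = u"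
  by (induction u) (auto simp: block_starts_pi_sig non_erasing_def)

lemma pi_word_eq_Nil_iff: "non_erasing \<sigma> \<Longrightarrow> pi_word \<sigma> u = [] \<longleftrightarrow> u = []"
  by (metis block_starts_pi_word block_starts_simps(1) pi_word_simps(1))

lemma hd_pi_word: "non_erasing \<sigma> \<Longrightarrow> u \<noteq> [] \<Longrightarrow> hd (pi_word \<sigma> u) = (hd u, 1)"
  by (cases u) (auto simp: non_erasing_def, subst pi_sig_Cons, auto)

lemma admissible_pi_word: "non_erasing \<sigma> \<Longrightarrow> admissible \<sigma> (pi_word \<sigma> u)"
proof (induction u)
  case Nil
  then show ?case by (simp add: admissible_def)
next
  case (Cons a u)
  have "\<sigma> a \<noteq> []" using Cons.prems by (simp add: non_erasing_def)
  then have "adjacent \<sigma> (last (pi_sig \<sigma> a)) (hd (pi_word \<sigma> u))" if "u \<noteq> []"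
    using hd_pi_word[OF Cons.prems that] by (simp add: last_pi_sig adjacent_def)
  then show ?case
    using Cons set_pi_sig_subset[of \<sigma> a] successively_adjacent_pi_sig[of \<sigma> a]
    by (cases "u = []") (auto simp: admissible_def successively_append_iff)
qed

lemma admissible_sublist: "admissible \<sigma> v \<Longrightarrow> sublist w v \<Longrightarrow> admissible \<sigma> w"
  by (auto simp: admissible_def sublist_def successively_append_iff)

lemma admissible_snoc:
  "w \<noteq> [] \<Longrightarrow> admissible \<sigma> (w @ [p]) \<longleftrightarrow> admissible \<sigma> w \<and> p \<in> Asig \<sigma> \<and> adjacent \<sigma> (last w) p"
  by (auto simp: admissible_def successively_append_iff)

lemma admissible_Cons:
  "w \<noteq> [] \<Longrightarrow> admissible \<sigma> (p # w) \<longleftrightarrow> admissible \<sigma> w \<and> p \<in> Asig \<sigma> \<and> adjacent \<sigma> p (hd w)"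
  by (auto simp: admissible_def successively_Cons)

lemma drop_pi_sig_adjacent:
  assumes q: "q \<in> Asig \<sigma>" and p: "p \<in> Asig \<sigma>" and "adjacent \<sigma> q p"
  shows "drop (snd q) (pi_sig \<sigma> (fst q)) @ (if snd p = 1 then pi_sig \<sigma> (fst p) else []) =
    p # drop (snd p) (pi_sig \<sigma> (fst p))"
proof (cases "snd p = 1")
  case True
  then have "snd q = length (\<sigma> (fst q))"
    using assms by (auto simp: adjacent_def Asig_iff)
  moreover have "0 < length (\<sigma> (fst p))"
    using p True by (simp add: Asig_iff Suc_le_eq)
  then have "pi_sig \<sigma> (fst p) = p # drop (snd p) (pi_sig \<sigma> (fst p))"
    using drop_pi_sig[of 0 \<sigma> "fst p"] True by (cases p) simp
  ultimately show ?thesis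
    using True by simp
next
  case False
  then have "fst p = fst q" "snd p = Suc (snd q)"
    using assms by (auto simp: adjacent_def)
  then show ?thesis
    using False p drop_pi_sig[of "snd q" \<sigma> "fst q"] by (cases p) (auto simp: Asig_iff)
qed

lemma pi_word_decode:
  assumes "admissible \<sigma> w" "w \<noteq> []"
  shows "pi_word \<sigma> (decode w) = take (snd (hd w) - 1) (pi_sig \<sigma> (fst (hd w))) @ w
           @ drop (snd (last w)) (pi_sig \<sigma> (fst (last w)))"
  using assms
proof (induction w rule: rev_induct)
  case Nil
  then show ?case by simp
next
  case (snoc p w)
  have pA: "p \<in> Asig \<sigma>"
    using snoc.prems by (auto simp: admissible_def)
  show ?case
  proof (cases "w = []")
    case True
    have "drop (snd p - 1) (pi_sig \<sigma> (fst p)) = p # drop (snd p) (pi_sig \<sigma> (fst p))"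
      using drop_pi_sig[of "snd p - 1" \<sigma> "fst p"] pA by (cases p) (auto simp: Asig_iff)
    then show ?thesis
      using True append_take_drop_id[of "snd p - 1" "pi_sig \<sigma> (fst p)"]
      by (simp add: decode_def)
  next
    case False
    have adm: "admissible \<sigma> w" and adj: "adjacent \<sigma> (last w) p"
      using snoc.prems(1) unfolding admissible_snoc[OF False] by blast+
    have lA: "last w \<in> Asig \<sigma>"
      using adm False by (auto simp: admissible_def)
    have tail: "drop (snd (last w)) (pi_sig \<sigma> (fst (last w))) @
        (if snd p = 1 then pi_sig \<sigma> (fst p) else []) = p # drop (snd p) (pi_sig \<sigma> (fst p))"
      using drop_pi_sig_adjacent[OF lA pA adj] .
    have "pi_word \<sigma> (decode (w @ [p])) =
        pi_word \<sigma> (decode w) @ (if snd p = 1 then pi_sig \<sigma> (fst p) else [])"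
      using False by (simp add: decode_snoc)
    also have "\<dots> = take (snd (hd w) - 1) (pi_sig \<sigma> (fst (hd w))) @ w @
        (drop (snd (last w)) (pi_sig \<sigma> (fst (last w))) @ (if snd p = 1 then pi_sig \<sigma> (fst p) else []))"
      unfolding snoc.IH[OF adm False] by (simp only: append_assoc)
    also have "\<dots> = take (snd (hd (w @ [p])) - 1) (pi_sig \<sigma> (fst (hd (w @ [p])))) @ (w @ [p])
        @ drop (snd (last (w @ [p]))) (pi_sig \<sigma> (fst (last (w @ [p]))))"
      unfolding tail using False by simp
    finally show ?thesis .
  qed
qed

lemma last_block_starts:
  assumes "successively (adjacent \<sigma>) w" "w \<noteq> []" "snd (hd w) = 1"
  shows "block_starts w \<noteq> [] \<and> last (block_starts w) = fst (last w)"
  using assms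
proof (induction w rule: rev_induct)
  case (snoc p w)
  show ?case
  proof (cases "w = []")
    case True
    then show ?thesis
      using snoc.prems(3) by simp
  next
    case False
    have "successively (adjacent \<sigma>) w" and adj: "adjacent \<sigma> (last w) p"
      using snoc.prems(1) False by (simp_all add: successively_append_iff)
    moreover have "snd (hd w) = 1"
      using snoc.prems(3) False by simp
    ultimately have IH: "block_starts w \<noteq> [] \<and> last (block_starts w) = fst (last w)"
      using snoc.IH False by blast
    show ?thesis
    proof (cases "snd p = 1")
      case True
      then show ?thesis by simp
    next
      case False
      then have "fst p = fst (last w)"
        using adj by (simp add: adjacent_def)
      then show ?thesis
        using IH False \<open>w \<noteq> []\<close> by simp
    qed
  qed
qed simp

lemma sublist_decode:
  assumes ne: "non_erasing \<sigma>" and sub: "sublist w (pi_word \<sigma> u)" and "w \<noteq> []"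
  shows "sublist (decode w) u"
proof -
  obtain s t where split: "pi_word \<sigma> u = s @ w @ t"
    using sub by (auto simp: sublist_def)
  obtain p w' where w: "w = p # w'"
    using \<open>w \<noteq> []\<close> by (cases w) auto
  have "u = block_starts (pi_word \<sigma> u)"
    by (simp only: block_starts_pi_word[OF ne])
  also have "\<dots> = block_starts s @ block_starts w @ block_starts t"
    by (simp only: split block_starts_simps(3))
  finally have u: "u = block_starts s @ block_starts w @ block_starts t" .
  have "pi_word \<sigma> u \<noteq> []"
    unfolding split w by simp
  then have "u \<noteq> []"
    by (metis pi_word_simps(1))
  note hd_u = hd_pi_word[OF ne this]
  show ?thesis
  proof (cases "snd p = 1")
    case True
    then have "decode w = block_starts w"
      using w by (simp add: decode_Cons)
    then show ?thesis
      using u by (metis sublist_appendI)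
  next
    case False
    have "s \<noteq> []"
      using split w hd_u False by auto
    moreover have "successively (adjacent \<sigma>) (s @ [p])"
      using admissible_pi_word[OF ne, of u] unfolding split w admissible_def
      by (simp add: successively_append_iff)
    ultimately have "block_starts (s @ [p]) \<noteq> [] \<and> last (block_starts (s @ [p])) = fst p"
      using last_block_starts[of \<sigma> "s @ [p]"] split hd_u by (simp add: w)
    then obtain s' where "block_starts s = s' @ [fst p]"
      using False by (metis append_butlast_last_id append_Nil2 block_starts_simps(2,3))
    moreover have "decode w = fst p # block_starts w"
      using w False by (simp add: decode_Cons)
    ultimately have "u = s' @ decode w @ block_starts t"
      using u by simp
    then show ?thesis
      by (metis sublist_appendI)
  qed
qed

lemma hat_measure_eq:
  assumes ne: "non_erasing \<sigma>" and "w \<noteq> []"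
  shows "hat_measure \<sigma> \<mu> w = (if admissible \<sigma> w then emeasure \<mu> (cyl (decode w)) else 0)"
proof (cases "admissible \<sigma> w")
  case True
  let ?P = "\<lambda>u. sublist w (pi_word \<sigma> u)"
  define u where "u = (ARG_MIN length u. ?P u)"
  have "?P (decode w)"
    using pi_word_decode[OF True \<open>w \<noteq> []\<close>] by (metis sublist_appendI)
  then have "?P u" and "length u \<le> length (decode w)"
    unfolding u_def by (metis arg_min_nat_lemma)+
  moreover have "sublist (decode w) u"
    using sublist_decode[OF ne \<open>?P u\<close> \<open>w \<noteq> []\<close>] .
  ultimately have "u = decode w"
    by (auto simp: sublist_def)
  then show ?thesis
    using True \<open>?P (decode w)\<close> by (auto simp: hat_measure_def u_def)
next
  case False
  then have "\<not> sublist w (pi_word \<sigma> u)" for u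
    using admissible_sublist[OF admissible_pi_word[OF ne]] by blast
  then show ?thesis
    using False by (simp add: hat_measure_def)
qed

lemma decode_pi_word:
  assumes ne: "non_erasing \<sigma>" and "u \<noteq> []"
  shows "decode (pi_word \<sigma> u) = u"
proof -
  obtain a u' where u: "u = a # u'"
    using \<open>u \<noteq> []\<close> by (cases u) auto
  have "pi_word \<sigma> u = (a, 1) # tl (pi_sig \<sigma> a) @ pi_word \<sigma> u'"
    using ne u pi_sig_Cons[of \<sigma> a] by (simp add: non_erasing_def)
  then show ?thesis
    using block_starts_pi_word[OF ne, of u'] u
    by (simp only: decode_Cons block_starts_simps block_starts_tl_pi_sig) simp
qed

definition cyl_at :: "int \<Rightarrow> 'a list \<Rightarrow> (int \<Rightarrow> 'a) set" where
  "cyl_at a w = {x. \<forall>i<length w. x (a + int i + 1) = w ! i}"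

lemma cyl_at_0 [simp]: "cyl_at 0 w = cyl w"
  by (simp add: cyl_at_def cyl_def)

lemma space_seq_space [simp]: "space seq_space = UNIV"
  by (simp add: seq_space_def space_PiM)

lemma cyl_at_in_sets: "cyl_at a w \<in> sets seq_space"
proof -
  have "{x \<in> space seq_space. \<forall>i<length w. x (a + int i + 1) = w ! i} \<in> sets seq_space"
    unfolding seq_space_def by measurable
  then show ?thesis
    by (simp add: cyl_at_def)
qed

lemma cyl_in_sets: "cyl w \<in> sets seq_space"
  using cyl_at_in_sets[of 0 w] by simp

lemma shift_vimage_cyl_at: "shift -` cyl_at a w = cyl_at (a + 1) w"
  by (auto simp: cyl_at_def shift_def algebra_simps)

lemma emeasure_cyl_at:
  assumes sets: "sets \<mu> = sets seq_space" and inv: "shift_invariant \<mu>"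
  shows "emeasure \<mu> (cyl_at a w) = emeasure \<mu> (cyl w)"
proof -
  have step: "emeasure \<mu> (cyl_at (b + 1) w) = emeasure \<mu> (cyl_at b w)" for b
    using inv cyl_at_in_sets[of b w] sets unfolding shift_invariant_def
    by (metis shift_vimage_cyl_at)
  have "emeasure \<mu> (cyl_at a w) = emeasure \<mu> (cyl_at 0 w)"
  proof (induction a rule: int_induct[of _ 0])
    case (step1 i)
    then show ?case using step[of i] by simp
  next
    case (step2 i)
    then show ?case using step[of "i - 1"] by simp
  qed simp
  then show ?thesis
    by simp
qed

lemma cyl_eq_UN_snoc: "cyl u = (\<Union>c. cyl (u @ [c]))"
  by (auto simp: cyl_def nth_append less_Suc_eq)

lemma cyl_at_1_eq_UN_Cons: "cyl_at 1 u = (\<Union>c. cyl (c # u))"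
proof (intro equalityI subsetI)
  fix x
  assume "x \<in> cyl_at 1 u"
  then have h: "\<forall>i<length u. x (int i + 2) = u ! i"
    by (simp add: cyl_at_def algebra_simps)
  have "x \<in> cyl (x 1 # u)"
    unfolding cyl_def
  proof (intro CollectI allI impI)
    fix i
    assume "i < length (x 1 # u)"
    then show "x (int i + 1) = (x 1 # u) ! i"
      using h[rule_format, of "i - 1"] by (cases i) (auto simp: algebra_simps)
  qed
  then show "x \<in> (\<Union>c. cyl (c # u))"
    by blast
next
  fix x
  assume "x \<in> (\<Union>c. cyl (c # u))"
  then obtain c where h: "\<forall>i<Suc (length u). x (int i + 1) = (c # u) ! i"
    by (auto simp: cyl_def)
  show "x \<in> cyl_at 1 u"
    unfolding cyl_at_def
  proof (intro CollectI allI impI)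
    fix i
    assume "i < length u"
    then show "x (1 + int i + 1) = u ! i"
      using h[rule_format, of "Suc i"] by (simp add: algebra_simps)
  qed
qed

lemma emeasure_cyl_eq_sum_snoc:
  fixes u :: "'a::finite list"
  assumes "sets \<mu> = sets seq_space"
  shows "emeasure \<mu> (cyl u) = (\<Sum>c\<in>UNIV. emeasure \<mu> (cyl (u @ [c])))"
proof -
  have "(\<Sum>c\<in>UNIV. emeasure \<mu> (cyl (u @ [c]))) = emeasure \<mu> (\<Union>c. cyl (u @ [c]))"
  proof (rule sum_emeasure)
    show "(\<lambda>c. cyl (u @ [c])) ` UNIV \<subseteq> sets \<mu>"
      using assms cyl_in_sets by auto
    show "disjoint_family_on (\<lambda>c. cyl (u @ [c])) UNIV"
      by (auto simp: disjoint_family_on_def cyl_def nth_append)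
  qed simp
  then show ?thesis
    using cyl_eq_UN_snoc[of u] by simp
qed

lemma emeasure_cyl_eq_sum_Cons:
  fixes u :: "'a::finite list"
  assumes "sets \<mu> = sets seq_space" and "shift_invariant \<mu>"
  shows "emeasure \<mu> (cyl u) = (\<Sum>c\<in>UNIV. emeasure \<mu> (cyl (c # u)))"
proof -
  have "(\<Sum>c\<in>UNIV. emeasure \<mu> (cyl (c # u))) = emeasure \<mu> (\<Union>c. cyl (c # u))"
  proof (rule sum_emeasure)
    show "(\<lambda>c. cyl (c # u)) ` UNIV \<subseteq> sets \<mu>"
      using assms(1) cyl_in_sets by auto
    show "disjoint_family_on (\<lambda>c. cyl (c # u)) UNIV"
      by (auto simp: disjoint_family_on_def cyl_def) (metis nth_Cons_0 zero_less_Suc)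
  qed simp
  then show ?thesis
    using cyl_at_1_eq_UN_Cons[of u] emeasure_cyl_at[OF assms, of 1 u] by simp
qed

lemma inv_measures_cyl_meets_support:
  assumes "\<mu> \<in> inv_measures X" and "emeasure \<mu> (cyl u) \<noteq> 0"
  shows "cyl u \<inter> X \<noteq> {}"
proof
  assume "cyl u \<inter> X = {}"
  moreover have "AE x in \<mu>. x \<in> X" and sets: "sets \<mu> = sets seq_space"
    using assms(1) by (auto simp: inv_measures_def)
  ultimately have "AE x in \<mu>. x \<notin> cyl u"
    by auto
  then have "emeasure \<mu> {x \<in> space \<mu>. x \<in> cyl u} = 0"
    by (rule emeasure_eq_0_AE)
  moreover have "space \<mu> = UNIV"
    using sets_eq_imp_space_eq[OF sets] by simp
  ultimately show False
    using assms(2) by simp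
qed

lemma restrictions_eq_UN_cyl_at:
  assumes "J \<subseteq> {a<..a + int n}"
  shows "{x. \<forall>j\<in>J. x j \<in> A j} =
    (\<Union>w\<in>{w. length w = n \<and> (\<forall>i<n. a + int i + 1 \<in> J \<longrightarrow> w ! i \<in> A (a + int i + 1))}. cyl_at a w)"
proof (intro equalityI subsetI)
  fix x
  assume x: "x \<in> {x. \<forall>j\<in>J. x j \<in> A j}"
  let ?w = "map (\<lambda>i. x (a + int i + 1)) [0..<n]"
  show "x \<in> (\<Union>w\<in>{w. length w = n \<and> (\<forall>i<n. a + int i + 1 \<in> J \<longrightarrow> w ! i \<in> A (a + int i + 1))}. cyl_at a w)"
    using x by (intro UN_I[of ?w]) (auto simp: cyl_at_def)
next
  fix x
  assume "x \<in> (\<Union>w\<in>{w. length w = n \<and> (\<forall>i<n. a + int i + 1 \<in> J \<longrightarrow> w ! i \<in> A (a + int i + 1))}. cyl_at a w)"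
  then obtain w where w: "length w = n" "\<And>i. i < n \<Longrightarrow> a + int i + 1 \<in> J \<Longrightarrow> w ! i \<in> A (a + int i + 1)"
    and "x \<in> cyl_at a w"
    by blast
  have "x j \<in> A j" if "j \<in> J" for j
  proof -
    define i where "i = nat (j - a - 1)"
    have "a < j" "j \<le> a + int n"
      using assms that by auto
    then have "j = a + int i + 1" "i < n"
      by (simp_all add: i_def nat_less_iff)
    then show ?thesis
      using w \<open>x \<in> cyl_at a w\<close> that by (auto simp: cyl_at_def)
  qed
  then show "x \<in> {x. \<forall>j\<in>J. x j \<in> A j}"
    by blast
qed

lemma disjoint_family_cyl_at: "disjoint_family_on (cyl_at a) {w. length w = n}"
  by (auto simp: disjoint_family_on_def cyl_at_def intro!: nth_equalityI)

lemma finite_int_set_within_Ioc: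
  fixes J :: "int set"
  assumes "finite J"
  obtains a n where "J \<subseteq> {a<..a + int n}"
proof
  define a where "a = Min (insert 0 J) - 1"
  have "Min (insert 0 J) \<le> j \<and> j \<le> Max (insert 0 J)" if "j \<in> J" for j
    using assms that by simp
  then show "J \<subseteq> {a<..a + int (nat (Max (insert 0 J) - a))}"
    by (force simp: a_def)
qed

lemma seq_space_measure_eqI:
  fixes \<mu>1 \<mu>2 :: "(int \<Rightarrow> 'a::finite) measure"
  assumes sets: "sets \<mu>1 = sets seq_space" "sets \<mu>2 = sets seq_space"
    and "finite_measure \<mu>1"
    and eq: "\<And>a w. emeasure \<mu>1 (cyl_at a w) = emeasure \<mu>2 (cyl_at a w)"
  shows "\<mu>1 = \<mu>2"
proof (rule measure_eqI_PiM_infinite)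
  show "sets \<mu>1 = sets (Pi\<^sub>M UNIV (\<lambda>_. count_space UNIV))" "sets \<mu>2 = sets (Pi\<^sub>M UNIV (\<lambda>_. count_space UNIV))"
    using sets by (simp_all add: seq_space_def)
  fix J :: "int set" and A :: "int \<Rightarrow> 'a set"
  assume "finite J"
  then obtain a n where J: "J \<subseteq> {a<..a + int n}"
    by (rule finite_int_set_within_Ioc)
  define W where "W = {w. length w = n \<and> (\<forall>i<n. a + int i + 1 \<in> J \<longrightarrow> w ! i \<in> A (a + int i + 1))}"
  have W: "finite W" "W \<subseteq> {w. length w = n}"
    using finite_lists_length_eq[of "UNIV :: 'a set" n] by (auto simp: W_def intro: finite_subset)
  have "prod_emb UNIV (\<lambda>_. count_space UNIV) J (Pi\<^sub>E J A) = (\<Union>w\<in>W. cyl_at a w)"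
    using restrictions_eq_UN_cyl_at[OF J, of A]
    by (auto simp: W_def prod_emb_def space_PiM PiE_def Pi_def)
  moreover have "emeasure \<mu> (\<Union>w\<in>W. cyl_at a w) = (\<Sum>w\<in>W. emeasure \<mu> (cyl_at a w))"
    if "sets \<mu> = sets seq_space" for \<mu> :: "(int \<Rightarrow> 'a) measure"
    using that W disjoint_family_on_mono[OF W(2) disjoint_family_cyl_at] cyl_at_in_sets
    by (intro sum_emeasure[symmetric]) auto
  ultimately show "emeasure \<mu>1 (prod_emb UNIV (\<lambda>_. count_space UNIV) J (Pi\<^sub>E J A)) =
      emeasure \<mu>2 (prod_emb UNIV (\<lambda>_. count_space UNIV) J (Pi\<^sub>E J A))"
    using sets eq by simp
qed fact

section \<open>Consistency of the transferred weights\<close>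

lemma successors_in_Asig:
  assumes "non_erasing \<sigma>" and "q \<in> Asig \<sigma>"
  shows "{p \<in> Asig \<sigma>. adjacent \<sigma> q p} =
    (if snd q < length (\<sigma> (fst q)) then {(fst q, Suc (snd q))} else range (\<lambda>c. (c, 1)))"
  using assms by (cases q) (auto simp: adjacent_def Asig_def non_erasing_def Suc_le_eq)

lemma predecessors_in_Asig:
  assumes "non_erasing \<sigma>" and "q \<in> Asig \<sigma>"
  shows "{p \<in> Asig \<sigma>. adjacent \<sigma> p q} =
    (if 1 < snd q then {(fst q, snd q - 1)} else range (\<lambda>c. (c, length (\<sigma> c))))"
  using assms by (cases q) (auto simp: adjacent_def Asig_def non_erasing_def Suc_le_eq)

lemma sum_hat_measure_snoc:
  fixes \<sigma> :: "'a::finite \<Rightarrow> 'b list"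
  assumes sets: "sets \<mu> = sets seq_space" and ne: "non_erasing \<sigma>" and "w \<noteq> []"
  shows "(\<Sum>p\<in>Asig \<sigma>. hat_measure \<sigma> \<mu> (w @ [p])) = hat_measure \<sigma> \<mu> w"
proof (cases "admissible \<sigma> w")
  case False
  then show ?thesis
    using \<open>w \<noteq> []\<close> by (simp add: hat_measure_eq[OF ne] admissible_snoc)
next
  case True
  then have last: "last w \<in> Asig \<sigma>"
    using \<open>w \<noteq> []\<close> by (auto simp: admissible_def)
  have "(\<Sum>p\<in>Asig \<sigma>. hat_measure \<sigma> \<mu> (w @ [p])) =
      (\<Sum>p\<in>Asig \<sigma>. if adjacent \<sigma> (last w) p then emeasure \<mu> (cyl (decode (w @ [p]))) else 0)"
    using True \<open>w \<noteq> []\<close> by (intro sum.cong) (simp_all add: hat_measure_eq[OF ne] admissible_snoc)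
  also have "\<dots> = (\<Sum>p\<in>{p \<in> Asig \<sigma>. adjacent \<sigma> (last w) p}. emeasure \<mu> (cyl (decode (w @ [p]))))"
    by (simp add: sum.inter_filter[OF finite_Asig])
  also have "\<dots> = emeasure \<mu> (cyl (decode w))"
  proof (cases "snd (last w) < length (\<sigma> (fst (last w)))")
    case True
    then have "{p \<in> Asig \<sigma>. adjacent \<sigma> (last w) p} = {(fst (last w), Suc (snd (last w)))}"
      using successors_in_Asig[OF ne last] by simp
    moreover have "decode (w @ [(fst (last w), Suc (snd (last w)))]) = decode w"
      using last \<open>w \<noteq> []\<close> by (simp add: decode_snoc Asig_iff)
    ultimately show ?thesis
      by simp
  next
    case False
    then have "{p \<in> Asig \<sigma>. adjacent \<sigma> (last w) p} = range (\<lambda>c. (c, 1))"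
      using successors_in_Asig[OF ne last] by simp
    moreover have "(\<Sum>p\<in>range (\<lambda>c. (c, 1)). emeasure \<mu> (cyl (decode (w @ [p])))) =
        (\<Sum>c\<in>UNIV. emeasure \<mu> (cyl (decode (w @ [(c, 1)]))))"
      by (rule sum.reindex_cong[of "\<lambda>c. (c, 1)"]) (auto simp: inj_on_def)
    moreover have "decode (w @ [(c, 1)]) = decode w @ [c]" for c
      using \<open>w \<noteq> []\<close> by (simp add: decode_snoc)
    ultimately show ?thesis
      using emeasure_cyl_eq_sum_snoc[OF sets, of "decode w"] by simp
  qed
  finally show ?thesis
    using True \<open>w \<noteq> []\<close> by (simp add: hat_measure_eq[OF ne])
qed

lemma sum_hat_measure_Cons:
  fixes \<sigma> :: "'a::finite \<Rightarrow> 'b list"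
  assumes sets: "sets \<mu> = sets seq_space" and inv: "shift_invariant \<mu>"
    and ne: "non_erasing \<sigma>" and "w \<noteq> []"
  shows "(\<Sum>p\<in>Asig \<sigma>. hat_measure \<sigma> \<mu> (p # w)) = hat_measure \<sigma> \<mu> w"
proof (cases "admissible \<sigma> w")
  case False
  then show ?thesis
    using \<open>w \<noteq> []\<close> by (simp add: hat_measure_eq[OF ne] admissible_Cons)
next
  case True
  then have hd: "hd w \<in> Asig \<sigma>"
    using \<open>w \<noteq> []\<close> by (auto simp: admissible_def)
  have "(\<Sum>p\<in>Asig \<sigma>. hat_measure \<sigma> \<mu> (p # w)) =
      (\<Sum>p\<in>Asig \<sigma>. if adjacent \<sigma> p (hd w) then emeasure \<mu> (cyl (fst p # block_starts w)) else 0)"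
    using True \<open>w \<noteq> []\<close>
    by (intro sum.cong) (simp_all add: hat_measure_eq[OF ne] admissible_Cons decode_Cons)
  also have "\<dots> = (\<Sum>p\<in>{p \<in> Asig \<sigma>. adjacent \<sigma> p (hd w)}. emeasure \<mu> (cyl (fst p # block_starts w)))"
    by (simp add: sum.inter_filter[OF finite_Asig])
  also have "\<dots> = emeasure \<mu> (cyl (decode w))"
  proof (cases "1 < snd (hd w)")
    case True
    then have "{p \<in> Asig \<sigma>. adjacent \<sigma> p (hd w)} = {(fst (hd w), snd (hd w) - 1)}"
      using predecessors_in_Asig[OF ne hd] by simp
    moreover have "fst (hd w) # block_starts w = decode w"
      using True \<open>w \<noteq> []\<close> by (cases w) (simp_all add: decode_Cons)
    ultimately show ?thesis
      by simp
  next
    case False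
    then have "{p \<in> Asig \<sigma>. adjacent \<sigma> p (hd w)} = range (\<lambda>c. (c, length (\<sigma> c)))"
      using predecessors_in_Asig[OF ne hd] by simp
    moreover have "(\<Sum>p\<in>range (\<lambda>c. (c, length (\<sigma> c))). emeasure \<mu> (cyl (fst p # block_starts w))) =
        (\<Sum>c\<in>UNIV. emeasure \<mu> (cyl (c # block_starts w)))"
      by (rule sum.reindex_cong[of "\<lambda>c. (c, length (\<sigma> c))"]) (auto simp: inj_on_def)
    moreover have "block_starts w = decode w"
      using False hd \<open>w \<noteq> []\<close> by (cases w) (auto simp: decode_Cons Asig_iff)
    ultimately show ?thesis
      using emeasure_cyl_eq_sum_Cons[OF sets inv, of "decode w"] by simp
  qed
  finally show ?thesis
    using True \<open>w \<noteq> []\<close> by (simp add: hat_measure_eq[OF ne])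
qed

definition words :: "'c set \<Rightarrow> nat \<Rightarrow> 'c list set" where
  "words A n = {w. set w \<subseteq> A \<and> length w = n}"

lemma finite_words: "finite A \<Longrightarrow> finite (words A n)"
  unfolding words_def by (rule finite_lists_length_eq)

lemma words_0: "words A 0 = {[]}"
  by (auto simp: words_def)

lemma words_Suc_Cons: "words A (Suc n) = (\<lambda>(p, t). p # t) ` (A \<times> words A n)"
  by (auto simp: words_def length_Suc_conv image_iff)

lemma words_Suc_snoc: "words A (Suc n) = (\<lambda>(s, p). s @ [p]) ` (words A n \<times> A)"
  by (auto simp: words_def length_Suc_conv_rev image_iff)

lemma image_append_words:
  assumes "set c \<subseteq> A"
  shows "(\<lambda>(s, t). s @ c @ t) ` (words A L \<times> words A L) =
    {w \<in> words A (L + length c + L). take (length c) (drop L w) = c}"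
proof (intro equalityI subsetI)
  fix w
  assume w: "w \<in> {w \<in> words A (L + length c + L). take (length c) (drop L w) = c}"
  have "w = take L w @ take (length c) (drop L w) @ drop (length c) (drop L w)"
    by (simp only: append_take_drop_id)
  then have eq: "w = take L w @ c @ drop (length c) (drop L w)"
    using w by (metis (mono_tags, lifting) mem_Collect_eq)
  show "w \<in> (\<lambda>(s, t). s @ c @ t) ` (words A L \<times> words A L)"
  proof (rule image_eqI)
    show "w = (\<lambda>(s, t). s @ c @ t) (take L w, drop (length c) (drop L w))"
      unfolding case_prod_conv by (rule eq)
    show "(take L w, drop (length c) (drop L w)) \<in> words A L \<times> words A L"
      using w by (auto simp: words_def dest: in_set_takeD in_set_dropD)
  qed
qed (use assms in \<open>auto simp: words_def\<close>)

lemma sum_hat_measure_append: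
  fixes \<sigma> :: "'a::finite \<Rightarrow> 'b list"
  assumes "sets \<mu> = sets seq_space" and "non_erasing \<sigma>" and "w \<noteq> []"
  shows "(\<Sum>t\<in>words (Asig \<sigma>) n. hat_measure \<sigma> \<mu> (w @ t)) = hat_measure \<sigma> \<mu> w"
  using assms(3)
proof (induction n arbitrary: w)
  case (Suc n)
  have "(\<Sum>t\<in>words (Asig \<sigma>) (Suc n). hat_measure \<sigma> \<mu> (w @ t)) =
      (\<Sum>(p, t)\<in>Asig \<sigma> \<times> words (Asig \<sigma>) n. hat_measure \<sigma> \<mu> (w @ p # t))"
    unfolding words_Suc_Cons by (subst sum.reindex) (auto simp: inj_on_def case_prod_unfold)
  also have "\<dots> = (\<Sum>p\<in>Asig \<sigma>. \<Sum>t\<in>words (Asig \<sigma>) n. hat_measure \<sigma> \<mu> ((w @ [p]) @ t))"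
    by (simp add: sum.cartesian_product)
  also have "\<dots> = (\<Sum>p\<in>Asig \<sigma>. hat_measure \<sigma> \<mu> (w @ [p]))"
    by (intro sum.cong refl Suc.IH) simp
  also have "\<dots> = hat_measure \<sigma> \<mu> w"
    using sum_hat_measure_snoc[OF assms(1,2) Suc.prems] .
  finally show ?case .
qed (simp add: words_0)

lemma sum_hat_measure_prepend:
  fixes \<sigma> :: "'a::finite \<Rightarrow> 'b list"
  assumes "sets \<mu> = sets seq_space" "shift_invariant \<mu>" and "non_erasing \<sigma>" and "w \<noteq> []"
  shows "(\<Sum>s\<in>words (Asig \<sigma>) n. hat_measure \<sigma> \<mu> (s @ w)) = hat_measure \<sigma> \<mu> w"
  using assms(4)
proof (induction n arbitrary: w)
  case (Suc n)
  have "(\<Sum>s\<in>words (Asig \<sigma>) (Suc n). hat_measure \<sigma> \<mu> (s @ w)) =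
      (\<Sum>(s, p)\<in>words (Asig \<sigma>) n \<times> Asig \<sigma>. hat_measure \<sigma> \<mu> (s @ p # w))"
    unfolding words_Suc_snoc by (subst sum.reindex) (auto simp: inj_on_def case_prod_unfold)
  also have "\<dots> = (\<Sum>s\<in>words (Asig \<sigma>) n. \<Sum>p\<in>Asig \<sigma>. hat_measure \<sigma> \<mu> (s @ p # w))"
    by (simp add: sum.cartesian_product)
  also have "\<dots> = (\<Sum>p\<in>Asig \<sigma>. \<Sum>s\<in>words (Asig \<sigma>) n. hat_measure \<sigma> \<mu> (s @ (p # w)))"
    by (rule sum.swap)
  also have "\<dots> = (\<Sum>p\<in>Asig \<sigma>. hat_measure \<sigma> \<mu> (p # w))"
    by (intro sum.cong refl Suc.IH) simp
  also have "\<dots> = hat_measure \<sigma> \<mu> w"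
    using sum_hat_measure_Cons[OF assms(1-3) Suc.prems] .
  finally show ?case .
qed (simp add: words_0)

lemma emeasure_cyl_eq_sum_hat_measure:
  fixes \<sigma> :: "'a::finite \<Rightarrow> 'b list"
  assumes sets: "sets \<mu> = sets seq_space" and inv: "shift_invariant \<mu>"
    and ne: "non_erasing \<sigma>" and "v \<noteq> []"
  defines "c \<equiv> pi_word \<sigma> v"
  shows "emeasure \<mu> (cyl v) =
    (\<Sum>w\<in>{w \<in> words (Asig \<sigma>) (L + length c + L). take (length c) (drop L w) = c}. hat_measure \<sigma> \<mu> w)"
proof -
  have "c \<noteq> []"
    using \<open>v \<noteq> []\<close> pi_word_eq_Nil_iff[OF ne] by (simp add: c_def)
  have "admissible \<sigma> c"
    unfolding c_def by (rule admissible_pi_word[OF ne])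
  have inj: "inj_on (\<lambda>(s, t). s @ c @ t) (words (Asig \<sigma>) L \<times> words (Asig \<sigma>) L)"
    by (auto simp: inj_on_def words_def)
  have image: "(\<lambda>(s, t). s @ c @ t) ` (words (Asig \<sigma>) L \<times> words (Asig \<sigma>) L) =
      {w \<in> words (Asig \<sigma>) (L + length c + L). take (length c) (drop L w) = c}"
    using \<open>admissible \<sigma> c\<close> by (intro image_append_words) (simp add: admissible_def)
  have "emeasure \<mu> (cyl v) = hat_measure \<sigma> \<mu> c"
    using hat_measure_eq[OF ne \<open>c \<noteq> []\<close>] \<open>admissible \<sigma> c\<close> decode_pi_word[OF ne \<open>v \<noteq> []\<close>]
    by (simp add: c_def)
  also have "\<dots> = (\<Sum>s\<in>words (Asig \<sigma>) L. \<Sum>t\<in>words (Asig \<sigma>) L. hat_measure \<sigma> \<mu> (s @ c @ t))"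
    using sum_hat_measure_prepend[OF sets inv ne \<open>c \<noteq> []\<close>]
      sum_hat_measure_append[OF sets ne, where w = "_ @ c"] \<open>c \<noteq> []\<close>
    by simp
  also have "\<dots> = (\<Sum>w\<in>{w \<in> words (Asig \<sigma>) (L + length c + L). take (length c) (drop L w) = c}.
      hat_measure \<sigma> \<mu> w)"
    unfolding image[symmetric] sum.reindex[OF inj]
    by (simp add: sum.cartesian_product case_prod_unfold)
  finally show ?thesis .
qed

lemma pos_1 [simp]: "pos \<sigma> x 1 = 0"
  by (simp add: pos_def)

lemma pos_add1: "pos \<sigma> x (n + 1) = pos \<sigma> x n + int (length (\<sigma> (x n)))"
proof -
  consider "n \<ge> 1" | "n = 0" | "n + 1 \<le> 0"
    by linarith
  then show ?thesis
  proof cases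
    case 1
    then have "{1..<n + 1} = insert n {1..<n}"
      by auto
    with 1 show ?thesis
      by (simp add: pos_def)
  next
    case 3
    then have "{n..0} = insert n {n + 1..0}"
      by auto
    with 3 show ?thesis
      by (simp add: pos_def)
  qed (simp add: pos_def)
qed

lemma pos_unique:
  assumes "f 1 = 0" and "\<And>n. f (n + 1) = f n + int (length (\<sigma> (x n)))"
  shows "f n = pos \<sigma> x n"
proof (induction n rule: int_induct[of _ 1])
  case (step1 i)
  then show ?case using assms(2)[of i] pos_add1[of \<sigma> x i] by simp
next
  case (step2 i)
  then show ?case using assms(2)[of "i - 1"] pos_add1[of \<sigma> x "i - 1"] by simp
qed (simp add: assms(1))

lemma pos_diff_ge:
  assumes ne: "non_erasing \<sigma>" and "m \<le> n"
  shows "n - m \<le> pos \<sigma> x n - pos \<sigma> x m"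
  using assms(2)
proof (induction n rule: int_ge_induct)
  case (step i)
  have "1 \<le> length (\<sigma> (x i))"
    using ne by (simp add: non_erasing_def Suc_le_eq)
  then show ?case
    using step pos_add1[of \<sigma> x i] by simp
qed simp

text \<open>\<open>piZ \<sigma> x p\<close> is the letter of \<open>\<pi>\<^sub>\<sigma>\<^sup>\<int>(x)\<close> at position \<open>p\<close>: the position lies in the block
  \<open>\<sigma>(x\<^sub>n)\<close> with \<open>n = block_of \<sigma> x p\<close>, and \<open>piZ \<sigma> x p = (x\<^sub>n, k)\<close> encodes the letter \<open>x\<^sub>n(k)\<close>
  of \<open>\<A>\<^sub>\<sigma>\<close> sitting there.\<close>
definition block_of :: "('a \<Rightarrow> 'b list) \<Rightarrow> (int \<Rightarrow> 'a) \<Rightarrow> int \<Rightarrow> int" where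
  "block_of \<sigma> x p = (THE n. pos \<sigma> x n < p \<and> p \<le> pos \<sigma> x (n + 1))"

definition piZ :: "('a \<Rightarrow> 'b list) \<Rightarrow> (int \<Rightarrow> 'a) \<Rightarrow> int \<Rightarrow> 'a \<times> nat" where
  "piZ \<sigma> x p = (x (block_of \<sigma> x p), nat (p - pos \<sigma> x (block_of \<sigma> x p)))"

lemma block_exists:
  assumes ne: "non_erasing \<sigma>"
  shows "\<exists>n. pos \<sigma> x n < p \<and> p \<le> pos \<sigma> x (n + 1)"
proof (induction p rule: int_induct[of _ 1])
  case base
  have "1 \<le> length (\<sigma> (x 1))"
    using ne by (simp add: non_erasing_def Suc_le_eq)
  then show ?case
    using pos_add1[of \<sigma> x 1] by (intro exI[of _ 1]) simp
next
  case (step1 i)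
  then obtain n where n: "pos \<sigma> x n < i" "i \<le> pos \<sigma> x (n + 1)"
    by blast
  moreover have "pos \<sigma> x (n + 1) < pos \<sigma> x (n + 1 + 1)"
    using pos_diff_ge[OF ne, of "n + 1" "n + 1 + 1" x] by simp
  ultimately show ?case
    by (cases "i + 1 \<le> pos \<sigma> x (n + 1)") (auto intro: exI[of _ n] exI[of _ "n + 1"])
next
  case (step2 i)
  then obtain n where n: "pos \<sigma> x n < i" "i \<le> pos \<sigma> x (n + 1)"
    by blast
  moreover have "pos \<sigma> x (n - 1) < pos \<sigma> x n"
    using pos_diff_ge[OF ne, of "n - 1" n x] by simp
  ultimately show ?case
    by (cases "pos \<sigma> x n < i - 1") (auto intro: exI[of _ n] exI[of _ "n - 1"])
qed

lemma block_unique: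
  assumes ne: "non_erasing \<sigma>"
    and "pos \<sigma> x n < p" "p \<le> pos \<sigma> x (n + 1)" "pos \<sigma> x n' < p" "p \<le> pos \<sigma> x (n' + 1)"
  shows "n = n'"
proof (rule ccontr)
  assume "n \<noteq> n'"
  then consider "n + 1 \<le> n'" | "n' + 1 \<le> n"
    by linarith
  then show False
    by cases (use pos_diff_ge[OF ne, of "n + 1" n' x] pos_diff_ge[OF ne, of "n' + 1" n x] assms in simp_all)
qed

lemma block_of_bounds:
  assumes "non_erasing \<sigma>"
  shows "pos \<sigma> x (block_of \<sigma> x p) < p \<and> p \<le> pos \<sigma> x (block_of \<sigma> x p + 1)"
proof -
  have "\<exists>!n. pos \<sigma> x n < p \<and> p \<le> pos \<sigma> x (n + 1)"
    using block_exists[OF assms] block_unique[OF assms] by blast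
  then show ?thesis
    unfolding block_of_def by (rule theI')
qed

lemma block_of_eqI:
  assumes "non_erasing \<sigma>" and "pos \<sigma> x n < p" "p \<le> pos \<sigma> x (n + 1)"
  shows "block_of \<sigma> x p = n"
  using block_of_bounds[OF assms(1)] block_unique[OF assms(1)] assms(2,3) by blast

lemma sigmaZ_eq_alpha_piZ:
  assumes "non_erasing \<sigma>"
  shows "sigmaZ \<sigma> x p = alpha_sig \<sigma> (piZ \<sigma> x p)"
proof -
  have "1 \<le> p - pos \<sigma> x (block_of \<sigma> x p)"
    using block_of_bounds[OF assms, of x p] by simp
  then show ?thesis
    by (simp add: sigmaZ_def piZ_def alpha_sig_def block_of_def[symmetric] Let_def nat_diff_distrib')
qed

lemma abs_block_of_le:
  assumes ne: "non_erasing \<sigma>"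
  shows "\<bar>block_of \<sigma> x p\<bar> \<le> \<bar>p\<bar>"
proof -
  define n where "n = block_of \<sigma> x p"
  have "pos \<sigma> x n < p" "p \<le> pos \<sigma> x (n + 1)"
    using block_of_bounds[OF ne, of x p] by (simp_all add: n_def)
  then show ?thesis
    using pos_diff_ge[OF ne, of 1 n x] pos_diff_ge[OF ne, of "n + 1" 1 x]
    unfolding n_def[symmetric] by (cases "n \<ge> 1") auto
qed

lemma pos_cong:
  assumes "\<And>i. \<bar>i\<bar> \<le> R \<Longrightarrow> x i = y i" and "- R \<le> n" "n \<le> R + 1"
  shows "pos \<sigma> x n = pos \<sigma> y n"
  using assms unfolding pos_def by (auto intro!: sum.cong)

lemma piZ_cong:
  assumes ne: "non_erasing \<sigma>" and agree: "\<And>i. \<bar>i\<bar> \<le> \<bar>p\<bar> \<Longrightarrow> x i = y i"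
  shows "piZ \<sigma> x p = piZ \<sigma> y p"
proof -
  define n where "n = block_of \<sigma> x p"
  have n: "\<bar>n\<bar> \<le> \<bar>p\<bar>"
    using abs_block_of_le[OF ne] by (simp add: n_def)
  have pos: "pos \<sigma> x n = pos \<sigma> y n" "pos \<sigma> x (n + 1) = pos \<sigma> y (n + 1)"
    using n by (auto intro!: pos_cong[OF agree])
  then have "block_of \<sigma> y p = n"
    using block_of_bounds[OF ne, of x p] by (intro block_of_eqI[OF ne]) (simp_all add: n_def)
  then show ?thesis
    using pos agree[of n] n by (simp add: piZ_def n_def)
qed

lemma sigmaZ_cong:
  assumes "non_erasing \<sigma>" and "\<And>i. \<bar>i\<bar> \<le> \<bar>p\<bar> \<Longrightarrow> x i = y i"
  shows "sigmaZ \<sigma> x p = sigmaZ \<sigma> y p"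
  using piZ_cong[OF assms] by (simp add: sigmaZ_eq_alpha_piZ[OF assms(1)])

lemma pos_translate:
  "pos \<sigma> (\<lambda>i. x (i + k)) n = pos \<sigma> x (n + k) - pos \<sigma> x (1 + k)"
proof (rule pos_unique[symmetric])
  fix n
  show "pos \<sigma> x (n + 1 + k) - pos \<sigma> x (1 + k) =
      pos \<sigma> x (n + k) - pos \<sigma> x (1 + k) + int (length (\<sigma> (x (n + k))))"
    using pos_add1[of \<sigma> x "n + k"] by (simp add: algebra_simps)
qed simp

lemma block_of_translate:
  assumes ne: "non_erasing \<sigma>"
  shows "block_of \<sigma> (\<lambda>i. x (i + k)) q = block_of \<sigma> x (q + pos \<sigma> x (1 + k)) - k"
  using block_of_bounds[OF ne, of x "q + pos \<sigma> x (1 + k)"]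
  by (intro block_of_eqI[OF ne]) (auto simp: pos_translate algebra_simps)

lemma piZ_translate:
  assumes "non_erasing \<sigma>"
  shows "piZ \<sigma> (\<lambda>i. x (i + k)) q = piZ \<sigma> x (q + pos \<sigma> x (1 + k))"
  by (simp add: piZ_def block_of_translate[OF assms] pos_translate)

lemma piZ_first_block:
  assumes "non_erasing \<sigma>" and "0 < p" "p \<le> int (length (\<sigma> (x 1)))"
  shows "piZ \<sigma> x p = (x 1, nat p)"
proof -
  have "block_of \<sigma> x p = 1"
    using assms pos_add1[of \<sigma> x 1] by (intro block_of_eqI) auto
  then show ?thesis
    by (simp add: piZ_def)
qed

lemma funpow_shift: "(shift ^^ m) x = (\<lambda>i. x (i + int m))"
  by (induction m arbitrary: x) (auto simp: shift_def algebra_simps)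

lemma subshift_funpow_shift:
  assumes "subshift X" and "x \<in> X"
  shows "(shift ^^ m) x \<in> X"
proof (induction m)
  case (Suc m)
  then have "shift ((shift ^^ m) x) \<in> shift ` X"
    by (rule imageI)
  moreover have "shift ` X = X"
    using assms(1) by (simp add: subshift_def)
  ultimately show ?case
    by (simp only: funpow.simps comp_apply)
qed (simp add: assms(2))

lemma subshift_funpow_shift_preimage:
  assumes "subshift X" and "x \<in> X"
  obtains y where "y \<in> X" "(shift ^^ m) y = x"
proof -
  have "\<exists>y\<in>X. (shift ^^ m) y = x"
  proof (induction m)
    case (Suc m)
    then obtain y where "y \<in> X" "(shift ^^ m) y = x"
      by blast
    moreover obtain z where "z \<in> X" "y = shift z"
      using \<open>y \<in> X\<close> assms(1) unfolding subshift_def by (metis imageE)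
    ultimately show ?case
      by (metis funpow_Suc_right comp_apply)
  qed (use assms(2) in auto)
  then show ?thesis
    using that by blast
qed

lemma subshift_translate:
  assumes "subshift X" and "x \<in> X"
  shows "(\<lambda>i. x (i + k)) \<in> X"
proof (cases "0 \<le> k")
  case True
  then show ?thesis
    using subshift_funpow_shift[OF assms, of "nat k"] by (simp add: funpow_shift)
next
  case False
  obtain y where "y \<in> X" "(shift ^^ nat (- k)) y = x"
    using subshift_funpow_shift_preimage[OF assms] .
  moreover from this(2) False have "(\<lambda>i. x (i + k)) = y"
    by (auto simp: funpow_shift)
  ultimately show ?thesis
    by simp
qed

section \<open>A uniform recognizability radius\<close>

lemma finite_valued_seq_pointwise_convergent_subseq:
  fixes f :: "nat \<Rightarrow> int \<Rightarrow> 'c::finite"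
  obtains g r where "strict_mono r" "\<And>i. eventually (\<lambda>n. f (r n) i = g i) sequentially"
proof -
  txt \<open>\<open>'c\<close> carries no topology: embed it into the discrete space \<open>nat\<close> and use that
    the product of the finite ranges is compact.\<close>
  define e where "e = (to_nat :: 'c \<Rightarrow> nat)"
  have "inj e"
    unfolding e_def by (rule inj_to_nat)
  define K where "K = PiE (UNIV :: int set) (\<lambda>_. range e)"
  have "compactin (product_topology (\<lambda>_. euclidean) UNIV) K"
    unfolding K_def compactin_PiE by (auto intro: finite_imp_compact)
  then have "seq_compact K"
    by (simp add: compact_imp_seq_compact euclidean_product_topology)
  moreover have "\<forall>n. (\<lambda>i. e (f n i)) \<in> K"
    by (auto simp: K_def)
  ultimately obtain l r where "strict_mono r" and lim: "((\<lambda>n i. e (f n i)) \<circ> r) \<longlonglongrightarrow> l"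
    using seq_compactE by metis
  have conv: "eventually (\<lambda>n. f (r n) i = inv e (l i)) sequentially" for i
  proof -
    have "(\<lambda>n. e (f (r n) i)) \<longlonglongrightarrow> l i"
      using continuous_on_tendsto_compose[OF continuous_on_product_coordinates[of i] lim]
      by (simp add: comp_def)
    then have "eventually (\<lambda>n. e (f (r n) i) = l i) sequentially"
      by (simp add: tendsto_discrete)
    then show ?thesis
      by (rule eventually_mono) (metis \<open>inj e\<close> inv_f_f)
  qed
  show ?thesis
    by (rule that[OF \<open>strict_mono r\<close> conv])
qed

lemma eventually_eq_on_window:
  fixes R :: int
  assumes "\<And>i. eventually (\<lambda>n. f n i = x i) sequentially"
  shows "eventually (\<lambda>n. \<forall>i. \<bar>i\<bar> \<le> R \<longrightarrow> f n i = x i) sequentially"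
proof -
  have "eventually (\<lambda>n. \<forall>i\<in>{-R..R}. f n i = x i) sequentially"
    using assms by (intro eventually_ball_finite) auto
  then show ?thesis
    by eventually_elim (simp add: abs_le_iff)
qed

lemma seq_closed_pointwise_limit:
  assumes "seq_closed X" and "\<And>n. f n \<in> X" and "\<And>i. eventually (\<lambda>n. f n i = x i) sequentially"
  shows "x \<in> X"
proof -
  have "\<exists>y\<in>X. \<forall>i. \<bar>i\<bar> \<le> int R \<longrightarrow> y i = x i" for R
  proof -
    have "eventually (\<lambda>n. \<forall>i. \<bar>i\<bar> \<le> int R \<longrightarrow> f n i = x i) sequentially"
      by (rule eventually_eq_on_window) (rule assms(3))
    then obtain n where "\<forall>i. \<bar>i\<bar> \<le> int R \<longrightarrow> f n i = x i"
      using eventually_happens'[OF sequentially_bot] by blast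
    then show ?thesis
      using assms(2)[of n] by blast
  qed
  then show ?thesis
    using assms(1) unfolding seq_closed_def by blast
qed

lemma uniform_witness_antimono:
  assumes "finite F" and "\<And>L. \<exists>j\<in>F. P L j" and "\<And>L L' j. L \<le> L' \<Longrightarrow> P L' j \<Longrightarrow> P L j"
  shows "\<exists>j\<in>F. \<forall>L::nat. P L j"
proof (rule ccontr)
  assume "\<not> ?thesis"
  then obtain M where M: "\<And>j. j \<in> F \<Longrightarrow> \<not> P (M j) j"
    by metis
  obtain j where "j \<in> F" "P (Max (M ` F)) j"
    using assms(2) by blast
  then show False
    using M assms(1,3) Max_ge[of "M ` F" "M j"] by blast
qed

lemma funpow_shift_sigmaZ_limit_eq:
  assumes ne: "non_erasing \<sigma>"
    and lim_x: "\<And>i. eventually (\<lambda>n. xs n i = x i) sequentially"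
    and lim_y: "\<And>i. eventually (\<lambda>n. ys n i = y i) sequentially"
    and window: "\<And>n i. \<bar>i\<bar> \<le> int n \<Longrightarrow>
      sigmaZ \<sigma> (xs n) (int j1 + 1 + i) = sigmaZ \<sigma> (ys n) (int j2 + 1 + i)"
  shows "(shift ^^ j1) (sigmaZ \<sigma> x) = (shift ^^ j2) (sigmaZ \<sigma> y)"
proof
  fix p
  let ?R = "\<bar>p\<bar> + int j1 + int j2"
  have "eventually (\<lambda>n. (\<forall>i. \<bar>i\<bar> \<le> ?R \<longrightarrow> xs n i = x i) \<and>
      (\<forall>i. \<bar>i\<bar> \<le> ?R \<longrightarrow> ys n i = y i) \<and> nat \<bar>p - 1\<bar> \<le> n) sequentially"
    using eventually_eq_on_window[OF lim_x] eventually_eq_on_window[OF lim_y]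
    by (intro eventually_conj eventually_ge_at_top)
  then obtain n where n: "\<And>i. \<bar>i\<bar> \<le> ?R \<Longrightarrow> xs n i = x i"
      "\<And>i. \<bar>i\<bar> \<le> ?R \<Longrightarrow> ys n i = y i" "nat \<bar>p - 1\<bar> \<le> n"
    using eventually_happens'[OF sequentially_bot] by blast
  have "\<bar>p - 1\<bar> \<le> int n"
    using n(3) by linarith
  from window[OF this] have "sigmaZ \<sigma> (xs n) (p + int j1) = sigmaZ \<sigma> (ys n) (p + int j2)"
    by (simp add: algebra_simps)
  moreover have "sigmaZ \<sigma> x (p + int j1) = sigmaZ \<sigma> (xs n) (p + int j1)"
    using n(1) by (intro sigmaZ_cong[OF ne]) auto
  moreover have "sigmaZ \<sigma> y (p + int j2) = sigmaZ \<sigma> (ys n) (p + int j2)"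
    using n(2) by (intro sigmaZ_cong[OF ne]) auto
  ultimately show "(shift ^^ j1) (sigmaZ \<sigma> x) p = (shift ^^ j2) (sigmaZ \<sigma> y) p"
    by (simp add: funpow_shift)
qed

text \<open>Compactness: a limit point \<open>(x, y)\<close> of the pairs \<open>(xs L, ys L)\<close> lies in \<open>X\<close> and satisfies
  \<open>T\<^sup>j\<^sup>1 \<sigma>\<^sup>\<int>(x) = T\<^sup>j\<^sup>2 \<sigma>\<^sup>\<int>(y)\<close>; recognizability then forces \<open>x = y\<close> and \<open>j1 = j2\<close>.\<close>
lemma recognizable_limit_agree:
  fixes xs ys :: "nat \<Rightarrow> int \<Rightarrow> 'a::finite"
  assumes ne: "non_erasing \<sigma>" and X: "subshift X" and R: "recognizable \<sigma> X"
    and in_X: "\<And>L. xs L \<in> X" "\<And>L. ys L \<in> X"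
    and j: "\<And>L. j1 < length (\<sigma> (xs L 1))" "\<And>L. j2 < length (\<sigma> (ys L 1))"
    and window: "\<And>L i. \<bar>i\<bar> \<le> int L \<Longrightarrow>
      sigmaZ \<sigma> (xs L) (int j1 + 1 + i) = sigmaZ \<sigma> (ys L) (int j2 + 1 + i)"
  shows "\<exists>L. xs L 1 = ys L 1 \<and> j1 = j2"
proof -
  obtain g r where r: "strict_mono r"
    and lim: "\<And>i. eventually (\<lambda>n. (xs (r n) i, ys (r n) i) = g i) sequentially"
    using finite_valued_seq_pointwise_convergent_subseq[of "\<lambda>n i. (xs n i, ys n i)"] by blast
  define x where "x i = fst (g i)" for i
  define y where "y i = snd (g i)" for i
  have lim_x: "eventually (\<lambda>n. xs (r n) i = x i) sequentially" for i
    using lim[of i] by eventually_elim (metis x_def fst_conv)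
  have lim_y: "eventually (\<lambda>n. ys (r n) i = y i) sequentially" for i
    using lim[of i] by eventually_elim (metis y_def snd_conv)
  have "seq_closed X"
    using X by (simp add: subshift_def)
  then have "x \<in> X" "y \<in> X"
    by (rule seq_closed_pointwise_limit[of _ "\<lambda>n. xs (r n)"] seq_closed_pointwise_limit[of _ "\<lambda>n. ys (r n)"];
        simp add: in_X lim_x lim_y)+
  obtain N where N: "xs (r N) 1 = x 1" "ys (r N) 1 = y 1"
    using eventually_happens'[OF sequentially_bot eventually_conj[OF lim_x lim_y]] by blast
  have "(shift ^^ j1) (sigmaZ \<sigma> x) = (shift ^^ j2) (sigmaZ \<sigma> y)"
  proof (rule funpow_shift_sigmaZ_limit_eq[OF ne lim_x lim_y])
    fix n :: nat and i :: int
    assume "\<bar>i\<bar> \<le> int n"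
    then have "\<bar>i\<bar> \<le> int (r n)"
      using seq_suble[OF r, of n] by linarith
    then show "sigmaZ \<sigma> (xs (r n)) (int j1 + 1 + i) = sigmaZ \<sigma> (ys (r n)) (int j2 + 1 + i)"
      by (rule window)
  qed
  moreover have "j1 < length (\<sigma> (x 1))" "j2 < length (\<sigma> (y 1))"
    using j[of "r N"] N by simp_all
  ultimately have "x = y \<and> j1 = j2"
    using R \<open>x \<in> X\<close> \<open>y \<in> X\<close> unfolding recognizable_def by blast
  then show ?thesis
    using N by (intro exI[of _ "r N"]) simp
qed

lemma recognizable_first_block_window:
  fixes \<sigma> :: "'a::finite \<Rightarrow> 'b list"
  assumes ne: "non_erasing \<sigma>" and X: "subshift X" and R: "recognizable \<sigma> X"
  obtains L where "\<And>x y j1 j2. x \<in> X \<Longrightarrow> y \<in> X \<Longrightarrow>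
    j1 < length (\<sigma> (x 1)) \<Longrightarrow> j2 < length (\<sigma> (y 1)) \<Longrightarrow>
    (\<And>i. \<bar>i\<bar> \<le> int L \<Longrightarrow> sigmaZ \<sigma> x (int j1 + 1 + i) = sigmaZ \<sigma> y (int j2 + 1 + i)) \<Longrightarrow>
    x 1 = y 1 \<and> j1 = j2"
proof -
  define bad where "bad L j1 j2 x y \<longleftrightarrow> x \<in> X \<and> y \<in> X \<and>
    j1 < length (\<sigma> (x 1)) \<and> j2 < length (\<sigma> (y 1)) \<and>
    (\<forall>i. \<bar>i\<bar> \<le> int L \<longrightarrow> sigmaZ \<sigma> x (int j1 + 1 + i) = sigmaZ \<sigma> y (int j2 + 1 + i)) \<and>
    \<not> (x 1 = y 1 \<and> j1 = j2)" for L j1 j2 x y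
  txt \<open>Otherwise, as there are only finitely many offsets and \<open>bad\<close> is antitone in \<open>L\<close>, one
    fixed pair of offsets admits bad pairs for every \<open>L\<close>, contradicting
    \<open>recognizable_limit_agree\<close>.\<close>
  have "\<exists>L. \<forall>j1 j2 x y. \<not> bad L j1 j2 x y"
  proof (rule ccontr)
    assume no_window: "\<nexists>L. \<forall>j1 j2 x y. \<not> bad L j1 j2 x y"
    define F where "F = (\<Union>a. {..<length (\<sigma> a)}) \<times> (\<Union>a. {..<length (\<sigma> a)})"
    have "\<exists>j\<in>F. \<forall>L. \<exists>x y. bad L (fst j) (snd j) x y"
    proof (rule uniform_witness_antimono)
      show "finite F"
        by (simp add: F_def)
      show "\<exists>j\<in>F. \<exists>x y. bad L (fst j) (snd j) x y" for L
      proof -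
        obtain j1 j2 x y where "bad L j1 j2 x y"
          using no_window by blast
        moreover from this have "(j1, j2) \<in> F"
          by (auto simp: F_def bad_def)
        ultimately show ?thesis
          by (intro bexI[of _ "(j1, j2)"]) auto
      qed
      show "\<exists>x y. bad L (fst j) (snd j) x y"
        if "L \<le> L'" and "\<exists>x y. bad L' (fst j) (snd j) x y" for L L' j
      proof -
        from that(2) obtain x y where "bad L' (fst j) (snd j) x y"
          by blast
        then have "bad L (fst j) (snd j) x y"
          using \<open>L \<le> L'\<close> unfolding bad_def by (meson order_trans of_nat_le_iff)
        then show ?thesis
          by blast
      qed
    qed
    then obtain j xs ys where bad: "\<And>L. bad L (fst j) (snd j) (xs L) (ys L)"
      by metis
    then have "\<exists>L. xs L 1 = ys L 1 \<and> fst j = snd j"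
      by (intro recognizable_limit_agree[OF ne X R]) (auto simp: bad_def)
    then show False
      using bad by (auto simp: bad_def)
  qed
  then show ?thesis
    using that unfolding bad_def by blast
qed

lemma subshift_recenter:
  assumes ne: "non_erasing \<sigma>" and X: "subshift X" and "x \<in> X"
  obtains x' j where "x' \<in> X" "j < length (\<sigma> (x' 1))" "piZ \<sigma> x p = (x' 1, Suc j)"
    "\<And>i. sigmaZ \<sigma> x' (int j + 1 + i) = sigmaZ \<sigma> x (p + i)"
proof -
  define n where "n = block_of \<sigma> x p"
  define x' where "x' = (\<lambda>i. x (i + (n - 1)))"
  define c where "c = pos \<sigma> x n"
  have piZ_x': "piZ \<sigma> x' t = piZ \<sigma> x (t + c)" for t
    using piZ_translate[OF ne, of x "n - 1" t] by (simp add: x'_def c_def)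
  have bounds: "0 < p - c" "p - c \<le> int (length (\<sigma> (x' 1)))"
    using block_of_bounds[OF ne, of x p] pos_add1[of \<sigma> x n] by (simp_all add: n_def c_def x'_def)
  define j where "j = nat (p - c - 1)"
  have j: "int j + 1 = p - c" "j < length (\<sigma> (x' 1))"
    using bounds by (simp_all add: j_def)
  show ?thesis
  proof
    show "x' \<in> X"
      unfolding x'_def by (rule subshift_translate[OF X \<open>x \<in> X\<close>])
    have "piZ \<sigma> x p = piZ \<sigma> x' (p - c)"
      by (simp add: piZ_x')
    also have "\<dots> = (x' 1, Suc j)"
      using piZ_first_block[OF ne, of "p - c" x', OF bounds] j(1) by simp
    finally show "piZ \<sigma> x p = (x' 1, Suc j)" .
    show "sigmaZ \<sigma> x' (int j + 1 + i) = sigmaZ \<sigma> x (p + i)" for i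
    proof -
      have "sigmaZ \<sigma> x' (int j + 1 + i) = alpha_sig \<sigma> (piZ \<sigma> x (int j + 1 + i + c))"
        by (simp only: sigmaZ_eq_alpha_piZ[OF ne] piZ_x')
      also have "int j + 1 + i + c = p + i"
        using j(1) by simp
      finally show ?thesis
        by (simp only: sigmaZ_eq_alpha_piZ[OF ne])
    qed
  qed (fact j(2))
qed

definition window_determines_piZ :: "('a \<Rightarrow> 'b list) \<Rightarrow> (int \<Rightarrow> 'a) set \<Rightarrow> nat \<Rightarrow> bool" where
  "window_determines_piZ \<sigma> X L \<longleftrightarrow> (\<forall>x\<in>X. \<forall>y\<in>X. \<forall>p q.
     (\<forall>i. \<bar>i\<bar> \<le> int L \<longrightarrow> sigmaZ \<sigma> x (p + i) = sigmaZ \<sigma> y (q + i)) \<longrightarrow> piZ \<sigma> x p = piZ \<sigma> y q)"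

lemma recognizable_imp_window_determines_piZ:
  fixes \<sigma> :: "'a::finite \<Rightarrow> 'b list"
  assumes ne: "non_erasing \<sigma>" and X: "subshift X" and R: "recognizable \<sigma> X"
  shows "\<exists>L. window_determines_piZ \<sigma> X L"
proof -
  obtain L where L: "\<And>x y j1 j2. x \<in> X \<Longrightarrow> y \<in> X \<Longrightarrow>
    j1 < length (\<sigma> (x 1)) \<Longrightarrow> j2 < length (\<sigma> (y 1)) \<Longrightarrow>
    (\<And>i. \<bar>i\<bar> \<le> int L \<Longrightarrow> sigmaZ \<sigma> x (int j1 + 1 + i) = sigmaZ \<sigma> y (int j2 + 1 + i)) \<Longrightarrow>
    x 1 = y 1 \<and> j1 = j2"
    using recognizable_first_block_window[OF ne X R] by blast
  have "piZ \<sigma> x p = piZ \<sigma> y q"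
    if "x \<in> X" "y \<in> X" and window: "\<forall>i. \<bar>i\<bar> \<le> int L \<longrightarrow> sigmaZ \<sigma> x (p + i) = sigmaZ \<sigma> y (q + i)"
    for x y p q
  proof -
    obtain x' j1 where x': "x' \<in> X" "j1 < length (\<sigma> (x' 1))" "piZ \<sigma> x p = (x' 1, Suc j1)"
      "\<And>i. sigmaZ \<sigma> x' (int j1 + 1 + i) = sigmaZ \<sigma> x (p + i)"
      using subshift_recenter[OF ne X \<open>x \<in> X\<close>] by blast
    obtain y' j2 where y': "y' \<in> X" "j2 < length (\<sigma> (y' 1))" "piZ \<sigma> y q = (y' 1, Suc j2)"
      "\<And>i. sigmaZ \<sigma> y' (int j2 + 1 + i) = sigmaZ \<sigma> y (q + i)"
      using subshift_recenter[OF ne X \<open>y \<in> X\<close>] by blast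
    have "x' 1 = y' 1 \<and> j1 = j2"
      using L[OF x'(1) y'(1) x'(2) y'(2)] window x'(4) y'(4) by simp
    then show ?thesis
      using x'(3) y'(3) by simp
  qed
  then show ?thesis
    unfolding window_determines_piZ_def by blast
qed

section \<open>Injectivity of the measure transfer\<close>

lemma inv_measures_eqI:
  fixes \<mu>1 \<mu>2 :: "(int \<Rightarrow> 'a::finite) measure"
  assumes "\<mu>1 \<in> inv_measures X" and "\<mu>2 \<in> inv_measures Y"
    and "\<And>v. emeasure \<mu>1 (cyl v) = emeasure \<mu>2 (cyl v)"
  shows "\<mu>1 = \<mu>2"
  using assms by (intro seq_space_measure_eqI) (simp_all add: inv_measures_def emeasure_cyl_at)

lemma pi_word_nth_eq_piZ:
  assumes ne: "non_erasing \<sigma>" and "x \<in> cyl u" and "i < length (pi_word \<sigma> u)"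
  shows "pi_word \<sigma> u ! i = piZ \<sigma> x (1 + int i)"
  using assms(2,3)
proof (induction u arbitrary: x i)
  case (Cons a u)
  have "x 1 = a"
    using Cons.prems(1) by (auto simp: cyl_def)
  show ?case
  proof (cases "i < length (\<sigma> a)")
    case True
    then show ?thesis
      using piZ_first_block[OF ne, of "1 + int i" x] \<open>x 1 = a\<close> by (simp add: nth_append)
  next
    case False
    define j where "j = i - length (\<sigma> a)"
    have "(\<lambda>k. x (k + 1)) \<in> cyl u"
      using Cons.prems(1) by (auto simp: cyl_def algebra_simps)
    moreover have j: "i = j + length (\<sigma> a)" "j < length (pi_word \<sigma> u)"
      using False Cons.prems(2) by (auto simp: j_def)
    ultimately have "pi_word \<sigma> (a # u) ! i = piZ \<sigma> (\<lambda>k. x (k + 1)) (1 + int j)"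
      using Cons.IH by (simp add: nth_append)
    also have "\<dots> = piZ \<sigma> x (1 + int i)"
      using piZ_translate[OF ne, of x 1 "1 + int j"] pos_add1[of \<sigma> x 1] \<open>x 1 = a\<close> j(1)
      by (simp add: add.assoc)
    finally show ?thesis .
  qed
qed simp

definition piZ_factor :: "('a \<Rightarrow> 'b list) \<Rightarrow> (int \<Rightarrow> 'a) set \<Rightarrow> ('a \<times> nat) list \<Rightarrow> bool" where
  "piZ_factor \<sigma> X w \<longleftrightarrow> (\<exists>x\<in>X. \<exists>q. \<forall>i<length w. w ! i = piZ \<sigma> x (q + int i))"

lemma hat_measure_nonzero_imp_piZ_factor:
  assumes "\<mu> \<in> inv_measures X" and ne: "non_erasing \<sigma>" and "w \<noteq> []"
    and "hat_measure \<sigma> \<mu> w \<noteq> 0"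
  shows "piZ_factor \<sigma> X w"
proof -
  have adm: "admissible \<sigma> w" and "emeasure \<mu> (cyl (decode w)) \<noteq> 0"
    using assms(4) hat_measure_eq[OF ne \<open>w \<noteq> []\<close>] by (auto split: if_splits)
  then obtain x where "x \<in> X" "x \<in> cyl (decode w)"
    using inv_measures_cyl_meets_support[OF assms(1)] by blast
  define pre where "pre = take (snd (hd w) - 1) (pi_sig \<sigma> (fst (hd w)))"
  have "hd w \<in> Asig \<sigma>"
    using adm \<open>w \<noteq> []\<close> by (auto simp: admissible_def)
  then have len: "length pre = snd (hd w) - 1" "1 \<le> snd (hd w)"
    by (auto simp: pre_def Asig_iff)
  have pi: "pi_word \<sigma> (decode w) = pre @ w @ drop (snd (last w)) (pi_sig \<sigma> (fst (last w)))"
    using pi_word_decode[OF adm \<open>w \<noteq> []\<close>] by (simp add: pre_def)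
  have "w ! i = piZ \<sigma> x (int (snd (hd w)) + int i)" if "i < length w" for i
  proof -
    have "w ! i = pi_word \<sigma> (decode w) ! (length pre + i)"
      using that by (simp add: pi nth_append)
    also have "\<dots> = piZ \<sigma> x (1 + int (length pre + i))"
      using that by (intro pi_word_nth_eq_piZ[OF ne \<open>x \<in> cyl (decode w)\<close>]) (simp add: pi)
    also have "1 + int (length pre + i) = int (snd (hd w)) + int i"
      using len by simp
    finally show ?thesis .
  qed
  then show ?thesis
    using \<open>x \<in> X\<close> unfolding piZ_factor_def by blast
qed

lemma piZ_factors_agree_inside:
  assumes ne: "non_erasing \<sigma>"
    and window: "window_determines_piZ \<sigma> X L"
    and "piZ_factor \<sigma> X w1" "piZ_factor \<sigma> X w2"
    and alpha: "map (alpha_sig \<sigma>) w1 = map (alpha_sig \<sigma>) w2"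
    and k: "L \<le> k" "k + L < length w1"
  shows "w1 ! k = w2 ! k"
proof -
  obtain x1 q1 where x1: "x1 \<in> X" "\<And>i. i < length w1 \<Longrightarrow> w1 ! i = piZ \<sigma> x1 (q1 + int i)"
    using assms(3) unfolding piZ_factor_def by blast
  obtain x2 q2 where x2: "x2 \<in> X" "\<And>i. i < length w2 \<Longrightarrow> w2 ! i = piZ \<sigma> x2 (q2 + int i)"
    using assms(4) unfolding piZ_factor_def by blast
  have len: "length w2 = length w1"
    using alpha by (metis length_map)
  have "sigmaZ \<sigma> x1 (q1 + int k + i) = sigmaZ \<sigma> x2 (q2 + int k + i)" if "\<bar>i\<bar> \<le> int L" for i
  proof -
    define m where "m = nat (int k + i)"
    have m: "int m = int k + i" "m < length w1"
      using that k by (auto simp: m_def)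
    have "sigmaZ \<sigma> x1 (q1 + int k + i) = alpha_sig \<sigma> (w1 ! m)"
      using x1(2)[OF m(2)] m(1) by (simp add: sigmaZ_eq_alpha_piZ[OF ne] add.assoc)
    also have "\<dots> = alpha_sig \<sigma> (w2 ! m)"
      using alpha m(2) len by (metis nth_map)
    also have "\<dots> = sigmaZ \<sigma> x2 (q2 + int k + i)"
      using x2(2) m len by (simp add: sigmaZ_eq_alpha_piZ[OF ne] add.assoc)
    finally show ?thesis .
  qed
  then have "piZ \<sigma> x1 (q1 + int k) = piZ \<sigma> x2 (q2 + int k)"
    using window x1(1) x2(1) unfolding window_determines_piZ_def by (simp add: add.assoc)
  then show ?thesis
    using x1(2) x2(2) k len by simp
qed

text \<open>No measure enters here, which is why the sum below depends on
  \<open>\<mu>\<close> only through its transfer \<open>\<nu>\<close>.\<close>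
definition framed_factors ::
  "('a \<Rightarrow> 'b list) \<Rightarrow> (int \<Rightarrow> 'a) set \<Rightarrow> nat \<Rightarrow> 'a list \<Rightarrow> ('a \<times> nat) list set" where
  "framed_factors \<sigma> X L v = {w \<in> words (Asig \<sigma>) (L + length (pi_word \<sigma> v) + L).
     piZ_factor \<sigma> X w \<and> take (length (pi_word \<sigma> v)) (drop L w) = pi_word \<sigma> v}"

lemma emeasure_cyl_eq_sum_framed_factors:
  fixes \<sigma> :: "'a::finite \<Rightarrow> 'b list"
  assumes \<mu>: "\<mu> \<in> inv_measures X" and ne: "non_erasing \<sigma>" and "v \<noteq> []"
  shows "emeasure \<mu> (cyl v) = (\<Sum>w\<in>framed_factors \<sigma> X L v. hat_measure \<sigma> \<mu> w)"
proof -
  define c where "c = pi_word \<sigma> v"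
  define S where "S = {w \<in> words (Asig \<sigma>) (L + length c + L). take (length c) (drop L w) = c}"
  have "c \<noteq> []"
    using \<open>v \<noteq> []\<close> pi_word_eq_Nil_iff[OF ne] by (simp add: c_def)
  have "emeasure \<mu> (cyl v) = (\<Sum>w\<in>S. hat_measure \<sigma> \<mu> w)"
    using emeasure_cyl_eq_sum_hat_measure[of \<mu> \<sigma> v L] \<mu> ne \<open>v \<noteq> []\<close>
    by (simp add: inv_measures_def S_def c_def)
  also have "\<dots> = (\<Sum>w\<in>framed_factors \<sigma> X L v. hat_measure \<sigma> \<mu> w)"
  proof (rule sum.mono_neutral_right)
    show "finite S"
      unfolding S_def by (rule finite_subset[OF _ finite_words[OF finite_Asig]]) auto
    show "framed_factors \<sigma> X L v \<subseteq> S"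
      by (auto simp: framed_factors_def S_def c_def)
    show "\<forall>w\<in>S - framed_factors \<sigma> X L v. hat_measure \<sigma> \<mu> w = 0"
    proof
      fix w
      assume w: "w \<in> S - framed_factors \<sigma> X L v"
      then have "w \<noteq> []"
        using \<open>c \<noteq> []\<close> by (cases w) (simp_all add: S_def words_def)
      then show "hat_measure \<sigma> \<mu> w = 0"
        using hat_measure_nonzero_imp_piZ_factor[OF \<mu> ne] w
        by (auto simp: S_def framed_factors_def c_def)
    qed
  qed
  finally show ?thesis .
qed

lemma framed_factors_alpha_fiber:
  assumes ne: "non_erasing \<sigma>" and window: "window_determines_piZ \<sigma> X L"
    and \<mu>: "\<mu> \<in> inv_measures X" and "v \<noteq> []" and w2: "w2 \<in> framed_factors \<sigma> X L v"
    and w: "set w \<subseteq> Asig \<sigma>" "map (alpha_sig \<sigma>) w = map (alpha_sig \<sigma>) w2" "hat_measure \<sigma> \<mu> w \<noteq> 0"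
  shows "w \<in> framed_factors \<sigma> X L v"
proof -
  define c where "c = pi_word \<sigma> v"
  have len: "length w = L + length c + L" "length w2 = L + length c + L"
    using w(2) w2 by (auto simp: framed_factors_def words_def c_def dest: arg_cong[where f = length])
  have "c \<noteq> []"
    using \<open>v \<noteq> []\<close> pi_word_eq_Nil_iff[OF ne] by (simp add: c_def)
  then have "w \<noteq> []"
    using len by auto
  then have "piZ_factor \<sigma> X w"
    using hat_measure_nonzero_imp_piZ_factor[OF \<mu> ne _ w(3)] by blast
  then have "w ! k = w2 ! k" if "L \<le> k" "k < L + length c" for k
    using piZ_factors_agree_inside[OF ne window, of w w2 k] w2 w(2) that len
    by (simp add: framed_factors_def)
  then have "take (length c) (drop L w) = take (length c) (drop L w2)"
    using len by (intro nth_equalityI) simp_all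
  then show ?thesis
    using w2 w(1) len \<open>piZ_factor \<sigma> X w\<close> by (simp add: framed_factors_def words_def c_def)
qed

lemma emeasure_cyl_eq_sum_transfer:
  fixes \<sigma> :: "'a::finite \<Rightarrow> 'b list"
  assumes ne: "non_erasing \<sigma>" and window: "window_determines_piZ \<sigma> X L"
    and \<mu>: "\<mu> \<in> inv_measures X" and \<nu>: "is_transfer \<sigma> \<mu> \<nu>" and "v \<noteq> []"
  shows "emeasure \<mu> (cyl v) =
    (\<Sum>w'\<in>map (alpha_sig \<sigma>) ` framed_factors \<sigma> X L v. emeasure \<nu> (cyl w'))"
proof -
  define F where "F = framed_factors \<sigma> X L v"
  define H where "H = hat_measure \<sigma> \<mu>"
  have "finite F"
    unfolding F_def framed_factors_def
    by (rule finite_subset[OF _ finite_words[OF finite_Asig]]) auto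
  have "emeasure \<mu> (cyl v) = sum H F"
    unfolding F_def H_def by (rule emeasure_cyl_eq_sum_framed_factors[OF \<mu> ne \<open>v \<noteq> []\<close>])
  also have "\<dots> = (\<Sum>w'\<in>map (alpha_sig \<sigma>) ` F. sum H {w \<in> F. map (alpha_sig \<sigma>) w = w'})"
    using \<open>finite F\<close> by (intro sum.group[symmetric]) auto
  also have "\<dots> = (\<Sum>w'\<in>map (alpha_sig \<sigma>) ` F. emeasure \<nu> (cyl w'))"
  proof (rule sum.cong[OF refl])
    fix w'
    assume "w' \<in> map (alpha_sig \<sigma>) ` F"
    then obtain w2 where w2: "w2 \<in> F" "w' = map (alpha_sig \<sigma>) w2"
      by blast
    have "pi_word \<sigma> v \<noteq> []"
      using \<open>v \<noteq> []\<close> pi_word_eq_Nil_iff[OF ne] by simp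
    moreover have "length w2 = L + length (pi_word \<sigma> v) + L"
      using w2(1) by (simp add: F_def framed_factors_def words_def)
    ultimately have "w' \<noteq> []"
      using w2(2) by (cases w2) simp_all
    have fin: "finite {w. set w \<subseteq> Asig \<sigma> \<and> map (alpha_sig \<sigma>) w = w'}"
      by (rule finite_subset[OF _ finite_words[OF finite_Asig, of _ "length w'"]])
        (auto simp: words_def)
    have sub: "{w \<in> F. map (alpha_sig \<sigma>) w = w'} \<subseteq> {w. set w \<subseteq> Asig \<sigma> \<and> map (alpha_sig \<sigma>) w = w'}"
      by (auto simp: F_def framed_factors_def words_def)
    have zero: "\<forall>w \<in> {w. set w \<subseteq> Asig \<sigma> \<and> map (alpha_sig \<sigma>) w = w'} - {w \<in> F. map (alpha_sig \<sigma>) w = w'}.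
        H w = 0"
      using framed_factors_alpha_fiber[OF ne window \<mu> \<open>v \<noteq> []\<close> w2(1)[unfolded F_def]] w2(2)
      by (auto simp: H_def F_def)
    have "sum H {w \<in> F. map (alpha_sig \<sigma>) w = w'} =
        sum H {w. set w \<subseteq> Asig \<sigma> \<and> map (alpha_sig \<sigma>) w = w'}"
      by (rule sum.mono_neutral_left[OF fin sub zero])
    also have "\<dots> = emeasure \<nu> (cyl w')"
      using \<nu> \<open>w' \<noteq> []\<close> by (simp add: is_transfer_def H_def)
    finally show "sum H {w \<in> F. map (alpha_sig \<sigma>) w = w'} = emeasure \<nu> (cyl w')" .
  qed
  finally show ?thesis
    by (simp add: F_def)
qed

theorem corollary3p9:
  fixes \<sigma> :: "'a::finite \<Rightarrow> 'b::finite list"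
    and X :: "(int \<Rightarrow> 'a) set"
  assumes "non_erasing \<sigma>"
    and "subshift X"
    and "recognizable \<sigma> X"
    and "\<mu>1 \<in> inv_measures X" and "\<mu>2 \<in> inv_measures X"
    and "is_transfer \<sigma> \<mu>1 \<nu>" and "is_transfer \<sigma> \<mu>2 \<nu>"
  shows "\<mu>1 = \<mu>2"
proof (rule inv_measures_eqI[OF assms(4,5)])
  obtain L where window: "window_determines_piZ \<sigma> X L"
    using recognizable_imp_window_determines_piZ[OF assms(1-3)] by blast
  have nonempty: "emeasure \<mu>1 (cyl v) = emeasure \<mu>2 (cyl v)" if "v \<noteq> []" for v
    using emeasure_cyl_eq_sum_transfer[OF assms(1) window assms(4,6) that]
      emeasure_cyl_eq_sum_transfer[OF assms(1) window assms(5,7) that] by simp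
  fix v
  show "emeasure \<mu>1 (cyl v) = emeasure \<mu>2 (cyl v)"
  proof (cases "v = []")
    case True
    have "sets \<mu>1 = sets seq_space" "sets \<mu>2 = sets seq_space"
      using assms(4,5) by (simp_all add: inv_measures_def)
    then show ?thesis
      using emeasure_cyl_eq_sum_snoc[of \<mu>1 v] emeasure_cyl_eq_sum_snoc[of \<mu>2 v] nonempty by simp
  qed (rule nonempty)
qed

end
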